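(* Let $g_c:[0,\infty)\to[0,\infty)$ be a measurable function with $0<K:=\int_0^\infty g_c(u)\,\mathrm{d}u<\infty$, let $\mu_1,\mu_2\in\mathbb{R}$, $\sigma>0$, $0<\rho<1$, $\boldsymbol{\mu}=(\mu_1,\mu_2)^\top$ and $\boldsymbol{\Sigma}=\begin{pmatrix}\sigma^2&\rho\sigma\\ \rho\sigma&1\end{pmatrix}$. Suppose $(Y^*,U^* )^\top$ has PDF $$f(\boldsymbol{y})=\frac{1}{|\boldsymbol{\Sigma}|^{1/2}\,\pi K}\,g_c\big((\boldsymbol{y}-\boldsymbol{\mu})^\top\boldsymbol{\Sigma}^{-1}(\boldsymbol{y}-\boldsymbol{\mu})\big),\qquad \boldsymbol{y}\in\mathbb{R}^2,$$ and $\mathbb{P}(U^*>0)>0$. Then the PDF of $Y^*$ conditional on $U^*>0$ is $$f_{Y^*\mid U^*>0}(y)=\frac{\rho\sqrt{1-\rho^2}}{\sigma}\,\frac{\int_{-\infty}^{z(y)} g_c\Big(\big(\frac{y-\mu_1}{\sigma}\big)^2+w^2\Big)\,\mathrm{d}w}{\int_{-\mu_2}^{\infty}\Big\{\int_{-\infty}^{\infty} g_c\Big(\big(\frac{x}{\rho}\big)^2+\big(\frac{u-x}{\sqrt{1-\rho^2}}\big)^2\Big)\,\mathrm{d}x\Big\}\,\mathrm{d}u},\qquad y\in\mathbb{R},$$ where $z(y)=\frac{\mu_2}{\sqrt{1-\rho^2}}+\frac{\rho}{\sqrt{1-\rho^2}}\,\frac{y-\mu_1}{\sigma}$.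
   Context: The distribution of $(Y^*,U^* )^\top$ is the bivariate symmetric distribution with location $\boldsymbol{\mu}$, scale matrix $\boldsymbol{\Sigma}$ and density generator $g_c$; $|\boldsymbol{\Sigma}|=\sigma^2(1-\rho^2)$. *)

theory Defs
  imports "HOL-Probability.Probability"
begin

text \<open>Quadratic form (y - mu)^T Sigma^{-1} (y - mu) for
  Sigma = [[sigma^2, rho*sigma], [rho*sg, 1]], |Sigma| = sg^2 (1 - rho^2),
  Sigma^{-1} = (1/|Sigma|) [[1, -rho*sg], [-rho*sg, sg^2]], written out.\<close>
definition biv_quad :: "real \<Rightarrow> real \<Rightarrow> real \<Rightarrow> real \<Rightarrow> real \<times> real \<Rightarrow> real" where
  "biv_quad mu1 mu2 sg rho p =
     (let a = fst p - mu1; b = snd p - mu2 in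
       (a^2 - 2 * rho * sg * a * b + sg^2 * b^2) / (sg^2 * (1 - rho^2)))"

definition biv_sym_density ::
  "(real \<Rightarrow> real) \<Rightarrow> real \<Rightarrow> real \<Rightarrow> real \<Rightarrow> real \<Rightarrow> real \<Rightarrow> real \<times> real \<Rightarrow> real" where
  "biv_sym_density g K mu1 mu2 sg rho p =
     g (biv_quad mu1 mu2 sg rho p) / (sqrt (sg^2 * (1 - rho^2)) * pi * K)"

definition zfun :: "real \<Rightarrow> real \<Rightarrow> real \<Rightarrow> real \<Rightarrow> real \<Rightarrow> real" where
  "zfun mu1 mu2 sg rho y =
     mu2 / sqrt (1 - rho^2) + rho / sqrt (1 - rho^2) * ((y - mu1) / sg)"

definition cond_density :: "(real \<Rightarrow> real) \<Rightarrow> real \<Rightarrow> real \<Rightarrow> real \<Rightarrow> real \<Rightarrow> real \<Rightarrow> real" where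
  "cond_density g mu1 mu2 sg rho y =
     rho * sqrt (1 - rho^2) / sg *
     ((LINT w:{..zfun mu1 mu2 sg rho y}|lborel. g (((y - mu1) / sg)^2 + w^2)) /
      (LINT u:{-mu2..}|lborel.
         (LINT x|lborel. g ((x / rho)^2 + ((u - x) / sqrt (1 - rho^2))^2))))"

end

theory Submission
  imports Defs
begin

text \<open>Condition through the joint density h: P(Y \<in> B, U > 0) is the integral over B of the
  slice integral of h(y, u) over u > 0, so that slice integral divided by P(U > 0) is the density
  of Y given U > 0. Both are evaluated by affine substitutions diagonalising the quadratic form:
  on a vertical line u = mu2 + rho s + sqrt(1 - rho^2) w, with s = (y - mu1)/sg, it becomes
  s^2 + w^2, which yields the numerator; on a horizontal line y = mu1 + (sg/rho) x it becomes the
  integrand of the denominator. The normalising constant K cancels.\<close>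

lemma distributed_emeasure_Times:
  assumes "sigma_finite_measure T"
    and Pxy: "distributed M (S \<Otimes>\<^sub>M T) (\<lambda>\<omega>. (X \<omega>, Y \<omega>)) Pxy"
    and B: "B \<in> sets S" and C: "C \<in> sets T"
  shows "emeasure M {\<omega> \<in> space M. X \<omega> \<in> B \<and> Y \<omega> \<in> C}
    = (\<integral>\<^sup>+x. (\<integral>\<^sup>+y. Pxy (x, y) * indicator C y \<partial>T) * indicator B x \<partial>S)"
proof -
  interpret T: sigma_finite_measure T by fact
  note Pxy[measurable]
  have "{\<omega> \<in> space M. X \<omega> \<in> B \<and> Y \<omega> \<in> C} = (\<lambda>\<omega>. (X \<omega>, Y \<omega>)) -` (B \<times> C) \<inter> space M"
    by auto
  also have "emeasure M \<dots> = (\<integral>\<^sup>+p. Pxy p * indicator (B \<times> C) p \<partial>(S \<Otimes>\<^sub>M T))"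
    using B C by (intro distributed_emeasure[OF Pxy]) simp
  also have "\<dots> = (\<integral>\<^sup>+x. \<integral>\<^sup>+y. Pxy (x, y) * indicator (B \<times> C) (x, y) \<partial>T \<partial>S)"
    using B C by (intro T.nn_integral_fst[symmetric]) simp
  also have "\<dots> = (\<integral>\<^sup>+x. (\<integral>\<^sup>+y. Pxy (x, y) * indicator C y \<partial>T) * indicator B x \<partial>S)"
  proof (rule nn_integral_cong)
    fix x assume [measurable]: "x \<in> space S"
    show "(\<integral>\<^sup>+y. Pxy (x, y) * indicator (B \<times> C) (x, y) \<partial>T)
        = (\<integral>\<^sup>+y. Pxy (x, y) * indicator C y \<partial>T) * indicator B x"
      using C by (subst nn_integral_multc[symmetric])
        (auto intro!: nn_integral_cong split: split_indicator)
  qed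
  finally show ?thesis .
qed

text \<open>No positivity hypothesis is needed: if P(Y \<in> C) = 0, both the uniform measure and the
  density divide by 0 in ennreal, i.e. multiply by \<infinity>.\<close>

lemma distributed_conditional_fst:
  assumes "sigma_finite_measure T"
    and Pxy: "distributed M (S \<Otimes>\<^sub>M T) (\<lambda>\<omega>. (X \<omega>, Y \<omega>)) Pxy"
    and C: "C \<in> sets T"
  shows "distributed (uniform_measure M {\<omega> \<in> space M. Y \<omega> \<in> C}) S X
    (\<lambda>x. (\<integral>\<^sup>+y. Pxy (x, y) * indicator C y \<partial>T) / emeasure M {\<omega> \<in> space M. Y \<omega> \<in> C})"
    (is "distributed (uniform_measure M ?A) S X ?f")
proof -
  interpret T: sigma_finite_measure T by fact
  note Pxy[measurable] C[measurable]
  have F_meas[measurable]: "(\<lambda>x. \<integral>\<^sup>+y. Pxy (x, y) * indicator C y \<partial>T) \<in> borel_measurable S"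
    by (rule T.borel_measurable_nn_integral) measurable
  have f_meas: "?f \<in> borel_measurable S"
    by measurable
  have "emeasure (distr (uniform_measure M ?A) S X) B = emeasure (density S ?f) B"
    if B[measurable]: "B \<in> sets S" for B
  proof -
    have "emeasure (distr (uniform_measure M ?A) S X) B
        = emeasure M (?A \<inter> (X -` B \<inter> space M)) / emeasure M ?A"
      by (simp add: emeasure_distr)
    also have "?A \<inter> (X -` B \<inter> space M) = {\<omega> \<in> space M. X \<omega> \<in> B \<and> Y \<omega> \<in> C}"
      by auto
    also have "emeasure M \<dots> / emeasure M ?A
        = (\<integral>\<^sup>+x. (\<integral>\<^sup>+y. Pxy (x, y) * indicator C y \<partial>T) * indicator B x \<partial>S) / emeasure M ?A"
      by (simp add: distributed_emeasure_Times[OF assms(1) Pxy B C])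
    also have "\<dots> = emeasure (density S ?f) B"
      by (subst nn_integral_divide[symmetric])
        (auto simp: emeasure_density f_meas divide_ennreal_def mult_ac)
    finally show ?thesis .
  qed
  then show ?thesis
    unfolding distributed_def using f_meas by (auto intro!: measure_eqI)
qed

lemma (in sigma_finite_measure) AE_nn_integral_eq_integral:
  fixes f :: "'b \<Rightarrow> 'a \<Rightarrow> real"
  assumes f_meas[measurable]: "(\<lambda>(x, y). f x y) \<in> borel_measurable (N \<Otimes>\<^sub>M M)"
    and f_nonneg: "\<And>x y. 0 \<le> f x y"
    and A[measurable]: "A \<in> sets N"
    and finite: "(\<integral>\<^sup>+x. (\<integral>\<^sup>+y. ennreal (f x y) \<partial>M) * indicator A x \<partial>N) \<noteq> \<infinity>"
  shows "AE x in N. x \<in> A \<longrightarrow> (\<integral>\<^sup>+y. ennreal (f x y) \<partial>M) = ennreal (\<integral>y. f x y \<partial>M)"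
proof -
  have [measurable]: "(\<lambda>x. \<integral>\<^sup>+y. ennreal (f x y) \<partial>M) \<in> borel_measurable N"
    by (rule borel_measurable_nn_integral) measurable
  have "AE x in N. (\<integral>\<^sup>+y. ennreal (f x y) \<partial>M) * indicator A x \<noteq> \<infinity>"
    using finite by (intro nn_integral_PInf_AE) measurable
  then show ?thesis
  proof eventually_elim
    case (elim x)
    show ?case
    proof
      assume "x \<in> A"
      then have [measurable]: "x \<in> space N"
        using sets.sets_into_space[OF A] by blast
      from \<open>x \<in> A\<close> elim have "(\<integral>\<^sup>+y. ennreal (f x y) \<partial>M) < \<infinity>"
        by (simp add: top.not_eq_extremum)
      then show "(\<integral>\<^sup>+y. ennreal (f x y) \<partial>M) = ennreal (\<integral>y. f x y \<partial>M)"
        by (intro nn_integral_eq_integral integrableI_nonneg) (auto simp: f_nonneg)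
    qed
  qed
qed

lemma (in sigma_finite_measure) nn_integral_iterated_eq_set_integral:
  fixes f :: "'b \<Rightarrow> 'a \<Rightarrow> real"
  assumes f_meas[measurable]: "(\<lambda>(x, y). f x y) \<in> borel_measurable (N \<Otimes>\<^sub>M M)"
    and f_nonneg: "\<And>x y. 0 \<le> f x y"
    and A[measurable]: "A \<in> sets N"
    and finite: "(\<integral>\<^sup>+x. (\<integral>\<^sup>+y. ennreal (f x y) \<partial>M) * indicator A x \<partial>N) \<noteq> \<infinity>"
  shows "(\<integral>\<^sup>+x. (\<integral>\<^sup>+y. ennreal (f x y) \<partial>M) * indicator A x \<partial>N)
    = ennreal (LINT x:A|N. \<integral>y. f x y \<partial>M)"
proof -
  have [measurable]: "(\<lambda>x. \<integral>y. f x y \<partial>M) \<in> borel_measurable N"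
    by (rule borel_measurable_lebesgue_integral) measurable
  have inner_nonneg: "0 \<le> (\<integral>y. f x y \<partial>M)" for x
    by (simp add: f_nonneg)
  have eq: "(\<integral>\<^sup>+x. (\<integral>\<^sup>+y. ennreal (f x y) \<partial>M) * indicator A x \<partial>N)
      = (\<integral>\<^sup>+x. ennreal (indicator A x * (\<integral>y. f x y \<partial>M)) \<partial>N)"
    using AE_nn_integral_eq_integral[OF assms]
    by (intro nn_integral_cong_AE, eventually_elim) (simp add: indicator_def)
  show ?thesis
    using finite unfolding eq set_lebesgue_integral_def real_scaleR_def
    by (intro nn_integral_eq_integral integrableI_nonneg)
      (auto simp: top.not_eq_extremum inner_nonneg)
qed

lemma biv_quad_conditional_coords:
  assumes "sg \<noteq> 0" "\<bar>rho\<bar> < 1"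
  shows "biv_quad mu1 mu2 sg rho (mu1 + sg * s, mu2 + rho * s + sqrt (1 - rho^2) * w) = s^2 + w^2"
proof -
  have "rho^2 < 1"
    using assms(2) by (simp add: abs_square_less_1)
  then have r2: "(sqrt (1 - rho^2))^2 = 1 - rho^2" and "1 - rho^2 \<noteq> 0"
    by simp_all
  then show ?thesis
    using assms(1) unfolding biv_quad_def Let_def
    by (simp add: field_simps)
      (simp add: power2_eq_square algebra_simps r2[unfolded power2_eq_square])
qed

lemma biv_quad_marginal_coords:
  assumes "sg \<noteq> 0" "rho \<noteq> 0" "\<bar>rho\<bar> < 1"
  shows "biv_quad mu1 mu2 sg rho (mu1 + sg / rho * x, mu2 + b)
    = (x / rho)^2 + ((b - x) / sqrt (1 - rho^2))^2"
proof -
  have "rho^2 < 1"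
    using assms(3) by (simp add: abs_square_less_1)
  then have r2: "(sqrt (1 - rho^2))^2 = 1 - rho^2" and "1 - rho^2 \<noteq> 0"
    by simp_all
  with assms(1,2) show ?thesis
    unfolding biv_quad_def Let_def power_divide r2
    by (simp add: divide_simps) (simp add: power2_eq_square algebra_simps)
qed

lemma biv_sym_density_measurable[measurable]:
  assumes [measurable]: "g \<in> borel_measurable borel"
  shows "biv_sym_density g K mu1 mu2 sg rho \<in> borel_measurable borel"
  unfolding biv_sym_density_def biv_quad_def Let_def by (subst borel_prod[symmetric]) measurable

lemma biv_sym_density_eq:
  assumes "0 < sg"
  shows "biv_sym_density g K mu1 mu2 sg rho p
    = g (biv_quad mu1 mu2 sg rho p) / (sg * sqrt (1 - rho^2) * pi * K)"
  using assms by (simp add: biv_sym_density_def real_sqrt_mult)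

locale biv_sym_params =
  fixes g :: "real \<Rightarrow> real" and K mu1 mu2 sg rho :: real
  assumes g_meas: "g \<in> borel_measurable borel"
    and g_nonneg: "\<And>u. 0 \<le> u \<Longrightarrow> 0 \<le> g u"
    and K_pos: "0 < K" and sg_pos: "0 < sg"
    and rho_pos: "0 < rho" and rho_lt1: "rho < 1"
begin

declare g_meas[measurable]

abbreviation dens :: "real \<times> real \<Rightarrow> real"
  where "dens \<equiv> biv_sym_density g K mu1 mu2 sg rho"

abbreviation slice_integrand :: "real \<Rightarrow> real \<Rightarrow> real"
  where "slice_integrand y w \<equiv> g (((y - mu1) / sg)^2 + w^2)"

abbreviation row_integrand :: "real \<Rightarrow> real \<Rightarrow> real"
  where "row_integrand b x \<equiv> g ((x / rho)^2 + ((b - x) / sqrt (1 - rho^2))^2)"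

lemma sqrt_one_minus_rho_square_pos: "0 < sqrt (1 - rho^2)"
  using rho_pos rho_lt1 by (simp add: power_less_one_iff)

lemma nn_integral_upper_slice:
  "(\<integral>\<^sup>+u. ennreal (dens (y, u)) * indicator {0<..} u \<partial>lborel)
    = ennreal (1 / (sg * pi * K))
      * (\<integral>\<^sup>+w. ennreal (indicator {..zfun mu1 mu2 sg rho y} w * slice_integrand y w) \<partial>lborel)"
proof -
  define r where "r = sqrt (1 - rho^2)"
  define s where "s = (y - mu1) / sg"
  define t where "t = mu2 + rho * s"
  define z where "z = zfun mu1 mu2 sg rho y"
  have r: "0 < r"
    using sqrt_one_minus_rho_square_pos by (simp add: r_def)
  have c: "0 < sg * r * pi * K"
    using r sg_pos K_pos by simp
  have z: "z = t / r"
    using sg_pos r by (simp add: z_def zfun_def r_def t_def s_def field_simps)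
  have density: "dens (y, t - r * w) = g (s^2 + w^2) / (sg * r * pi * K)" for w
    using biv_quad_conditional_coords[of sg rho mu1 mu2 s "- w"] sg_pos rho_pos rho_lt1
    by (simp add: biv_sym_density_eq s_def t_def r_def)
  have half_line: "AE w in lborel. indicator {0<..} (t - r * w) = (indicator {..z} w :: ennreal)"
    using AE_lborel_singleton[of z]
  proof eventually_elim
    case (elim w)
    have "0 < t - r * w \<longleftrightarrow> w < z"
      using r by (simp add: z field_simps)
    with elim show ?case
      by (auto simp: indicator_def)
  qed
  have "(\<integral>\<^sup>+u. ennreal (dens (y, u)) * indicator {0<..} u \<partial>lborel)
      = ennreal r * (\<integral>\<^sup>+w. ennreal (dens (y, t - r * w))
          * indicator {0<..} (t - r * w) \<partial>lborel)"
    using r by (subst nn_integral_real_affine[where t = t and c = "- r"]) auto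
  also have "\<dots> = ennreal r
      * (\<integral>\<^sup>+w. ennreal (indicator {..z} w * g (s^2 + w^2) / (sg * r * pi * K)) \<partial>lborel)"
    using half_line by (intro arg_cong2[where f = "(*)"] refl nn_integral_cong_AE, eventually_elim)
      (simp add: density indicator_def)
  also have "\<dots> = ennreal (1 / (sg * pi * K))
      * (\<integral>\<^sup>+w. ennreal (indicator {..z} w * g (s^2 + w^2)) \<partial>lborel)"
    using r c K_pos sg_pos
    by (simp add: nn_integral_cmult[symmetric] ennreal_mult[symmetric] g_nonneg indicator_def
        mult.assoc cong: nn_integral_cong)
  finally show ?thesis
    by (simp add: z_def s_def)
qed

lemma nn_integral_row:
  "(\<integral>\<^sup>+y. ennreal (dens (y, mu2 + b)) \<partial>lborel)
    = ennreal (1 / (rho * sqrt (1 - rho^2) * pi * K))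
      * (\<integral>\<^sup>+x. ennreal (row_integrand b x) \<partial>lborel)"
proof -
  define r where "r = sqrt (1 - rho^2)"
  have r: "0 < r"
    using sqrt_one_minus_rho_square_pos by (simp add: r_def)
  have "(\<integral>\<^sup>+y. ennreal (dens (y, mu2 + b)) \<partial>lborel)
      = ennreal (sg / rho) * (\<integral>\<^sup>+x. ennreal (dens (mu1 + sg / rho * x, mu2 + b)) \<partial>lborel)"
    using sg_pos rho_pos
    by (subst nn_integral_real_affine[where t = mu1 and c = "sg / rho"]) auto
  also have "\<dots> = ennreal (sg / rho)
      * (\<integral>\<^sup>+x. ennreal (row_integrand b x / (sg * r * pi * K)) \<partial>lborel)"
    using biv_quad_marginal_coords sg_pos rho_pos rho_lt1
    by (simp add: biv_sym_density_eq r_def)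
  also have "\<dots> = ennreal (1 / (rho * r * pi * K))
      * (\<integral>\<^sup>+x. ennreal (row_integrand b x) \<partial>lborel)"
    using r K_pos sg_pos rho_pos
    by (simp add: nn_integral_cmult[symmetric] ennreal_mult[symmetric] g_nonneg mult.assoc)
  finally show ?thesis
    by (simp add: r_def)
qed

lemma nn_integral_upper_half_plane:
  "(\<integral>\<^sup>+u. (\<integral>\<^sup>+y. ennreal (dens (y, u)) \<partial>lborel) * indicator {0<..} u \<partial>lborel)
    = ennreal (1 / (rho * sqrt (1 - rho^2) * pi * K))
      * (\<integral>\<^sup>+b. (\<integral>\<^sup>+x. ennreal (row_integrand b x) \<partial>lborel)
          * indicator {-mu2..} b \<partial>lborel)"
proof -
  have [measurable]: "(\<lambda>b. \<integral>\<^sup>+x. ennreal (row_integrand b x) \<partial>lborel)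
      \<in> borel_measurable borel"
    by (rule lborel.borel_measurable_nn_integral) measurable
  have [measurable]: "(\<lambda>u. \<integral>\<^sup>+y. ennreal (dens (y, u)) \<partial>lborel)
      \<in> borel_measurable borel"
    by (rule lborel.borel_measurable_nn_integral) (simp add: lborel_prod)
  have "(\<integral>\<^sup>+u. (\<integral>\<^sup>+y. ennreal (dens (y, u)) \<partial>lborel) * indicator {0<..} u \<partial>lborel)
      = (\<integral>\<^sup>+b. (\<integral>\<^sup>+y. ennreal (dens (y, mu2 + b)) \<partial>lborel)
          * indicator {0<..} (mu2 + b) \<partial>lborel)"
    by (subst nn_integral_real_affine[where t = mu2 and c = 1]) auto
  also have "\<dots> = (\<integral>\<^sup>+b. ennreal (1 / (rho * sqrt (1 - rho^2) * pi * K))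
      * ((\<integral>\<^sup>+x. ennreal (row_integrand b x) \<partial>lborel) * indicator {-mu2..} b) \<partial>lborel)"
    using AE_lborel_singleton[of "- mu2"]
    by (intro nn_integral_cong_AE, eventually_elim) (auto simp: nn_integral_row indicator_def)
  finally show ?thesis
    by (simp add: nn_integral_cmult)
qed

lemma emeasure_upper_half_plane:
  assumes "prob_space M"
    and joint: "distributed M (lborel \<Otimes>\<^sub>M lborel) (\<lambda>\<omega>. (Y \<omega>, U \<omega>))
      (\<lambda>p. ennreal (dens p))"
  shows "emeasure M {\<omega> \<in> space M. U \<omega> \<in> {0<..}}
    = ennreal (1 / (rho * sqrt (1 - rho^2) * pi * K))
      * ennreal (LINT b:{-mu2..}|lborel. (LINT x|lborel. row_integrand b x))"
proof -
  interpret prob_space M by fact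
  define T where "T = (\<integral>\<^sup>+b. (\<integral>\<^sup>+x. ennreal (row_integrand b x) \<partial>lborel)
    * indicator {-mu2..} b \<partial>lborel)"
  have c: "0 < 1 / (rho * sqrt (1 - rho^2) * pi * K)"
    using rho_pos sqrt_one_minus_rho_square_pos K_pos by simp
  have "emeasure M {\<omega> \<in> space M. U \<omega> \<in> {0<..}}
      = (\<integral>\<^sup>+u. (\<integral>\<^sup>+y. ennreal (dens (y, u)) \<partial>lborel) * indicator {0<..} u \<partial>lborel)"
    using distributed_emeasure[OF distr_marginal2[OF lborel.sigma_finite_measure_axioms
        lborel.sigma_finite_measure_axioms joint], of "{0<..}"]
    by (simp add: vimage_def Int_def conj_commute)
  also have "\<dots> = ennreal (1 / (rho * sqrt (1 - rho^2) * pi * K)) * T"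
    unfolding T_def by (rule nn_integral_upper_half_plane)
  finally have mass: "emeasure M {\<omega> \<in> space M. U \<omega> \<in> {0<..}}
      = ennreal (1 / (rho * sqrt (1 - rho^2) * pi * K)) * T" .
  then have "T \<noteq> \<infinity>"
    using emeasure_finite[of "{\<omega> \<in> space M. U \<omega> \<in> {0<..}}"] c
    by (auto simp: ennreal_mult_eq_top_iff)
  then have "T = ennreal (LINT b:{-mu2..}|lborel. (LINT x|lborel. row_integrand b x))"
    unfolding T_def
    by (intro lborel.nn_integral_iterated_eq_set_integral) (auto intro: g_nonneg)
  with mass show ?thesis
    by simp
qed

lemma upper_slice_integrand_measurable[measurable]:
  "(\<lambda>(y, w). indicator {..zfun mu1 mu2 sg rho y} w * slice_integrand y w)
    \<in> borel_measurable (lborel \<Otimes>\<^sub>M lborel)"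
  unfolding zfun_def indicator_def atMost_iff mem_Collect_eq by measurable

lemma upper_slice_integral_measurable[measurable]:
  "(\<lambda>y. LINT w:{..zfun mu1 mu2 sg rho y}|lborel. slice_integrand y w)
    \<in> borel_measurable borel"
  unfolding set_lebesgue_integral_def real_scaleR_def
  by (rule lborel.borel_measurable_lebesgue_integral) measurable

lemma upper_slice_integral_nonneg:
  "0 \<le> (LINT w:{..zfun mu1 mu2 sg rho y}|lborel. slice_integrand y w)"
  unfolding set_lebesgue_integral_def
  by (auto intro!: integral_nonneg_AE AE_I2 mult_nonneg_nonneg g_nonneg)

lemma AE_nn_integral_upper_slice:
  assumes "prob_space M"
    and joint: "distributed M (lborel \<Otimes>\<^sub>M lborel) (\<lambda>\<omega>. (Y \<omega>, U \<omega>))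
      (\<lambda>p. ennreal (dens p))"
  shows "AE y in lborel.
    (\<integral>\<^sup>+u. ennreal (dens (y, u)) * indicator {0<..} u \<partial>lborel)
      = ennreal (1 / (sg * pi * K))
        * ennreal (LINT w:{..zfun mu1 mu2 sg rho y}|lborel. slice_integrand y w)"
proof -
  interpret prob_space M by fact
  define I where
    "I y = (\<integral>\<^sup>+w. ennreal (indicator {..zfun mu1 mu2 sg rho y} w * slice_integrand y w) \<partial>lborel)"
    for y
  have [measurable]: "I \<in> borel_measurable lborel"
    unfolding I_def by (rule lborel.borel_measurable_nn_integral) measurable
  have c: "0 < 1 / (sg * pi * K)"
    using sg_pos K_pos by simp
  have "emeasure M {\<omega> \<in> space M. Y \<omega> \<in> UNIV \<and> U \<omega> \<in> {0<..}}
      = (\<integral>\<^sup>+y. (\<integral>\<^sup>+u. ennreal (dens (y, u)) * indicator {0<..} u \<partial>lborel)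
          * indicator UNIV y \<partial>lborel)"
    by (rule distributed_emeasure_Times[OF lborel.sigma_finite_measure_axioms joint]) auto
  also have "\<dots> = ennreal (1 / (sg * pi * K)) * (\<integral>\<^sup>+y. I y * indicator UNIV y \<partial>lborel)"
    by (simp add: nn_integral_upper_slice I_def nn_integral_cmult)
  finally have "(\<integral>\<^sup>+y. I y * indicator UNIV y \<partial>lborel) \<noteq> \<infinity>"
    using emeasure_finite[of "{\<omega> \<in> space M. Y \<omega> \<in> UNIV \<and> U \<omega> \<in> {0<..}}"] c
    by (auto simp: ennreal_mult_eq_top_iff)
  then have "AE y in lborel. y \<in> UNIV \<longrightarrow>
      I y = ennreal (\<integral>w. indicator {..zfun mu1 mu2 sg rho y} w * slice_integrand y w \<partial>lborel)"
    unfolding I_def by (intro lborel.AE_nn_integral_eq_integral)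
      (auto intro!: mult_nonneg_nonneg g_nonneg)
  then show ?thesis
    by eventually_elim (simp add: nn_integral_upper_slice I_def set_lebesgue_integral_def)
qed

lemma distributed_conditional_upper_half_plane:
  assumes "prob_space M"
    and joint: "distributed M (lborel \<Otimes>\<^sub>M lborel) (\<lambda>\<omega>. (Y \<omega>, U \<omega>))
      (\<lambda>p. ennreal (dens p))"
    and pos: "emeasure M {\<omega> \<in> space M. U \<omega> \<in> {0<..}} \<noteq> 0"
  shows "distributed (uniform_measure M {\<omega> \<in> space M. U \<omega> \<in> {0<..}}) lborel Y
    (\<lambda>y. ennreal (cond_density g mu1 mu2 sg rho y))"
proof -
  define N where "N y = (LINT w:{..zfun mu1 mu2 sg rho y}|lborel. slice_integrand y w)" for y
  define D where "D = (LINT b:{-mu2..}|lborel. (LINT x|lborel. row_integrand b x))"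
  note mass = emeasure_upper_half_plane[OF assms(1,2), folded D_def]
  have "0 < D"
    using pos unfolding mass by (rule contrapos_np) (simp add: ennreal_neg)
  have conditional: "AE y in lborel.
      (\<integral>\<^sup>+u. ennreal (dens (y, u)) * indicator {0<..} u \<partial>lborel)
        / emeasure M {\<omega> \<in> space M. U \<omega> \<in> {0<..}} = ennreal (cond_density g mu1 mu2 sg rho y)"
    using AE_nn_integral_upper_slice[OF assms(1,2), folded N_def]
  proof eventually_elim
    case (elim y)
    have "ennreal (1 / (sg * pi * K)) * ennreal (N y)
          / (ennreal (1 / (rho * sqrt (1 - rho^2) * pi * K)) * ennreal D)
        = ennreal (1 / (sg * pi * K) * N y / (1 / (rho * sqrt (1 - rho^2) * pi * K) * D))"
      using \<open>0 < D\<close> upper_slice_integral_nonneg[of y, folded N_def]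
        sg_pos K_pos rho_pos sqrt_one_minus_rho_square_pos
      by (simp add: ennreal_mult[symmetric] divide_ennreal)
    also have "1 / (sg * pi * K) * N y / (1 / (rho * sqrt (1 - rho^2) * pi * K) * D)
        = cond_density g mu1 mu2 sg rho y"
      unfolding cond_density_def N_def[symmetric] D_def[symmetric]
      using sg_pos K_pos by (simp add: field_simps)
    finally show ?case
      unfolding elim mass .
  qed
  have "(\<lambda>y. ennreal (cond_density g mu1 mu2 sg rho y)) \<in> borel_measurable lborel"
    unfolding cond_density_def D_def[symmetric] by measurable
  moreover have "distributed (uniform_measure M {\<omega> \<in> space M. U \<omega> \<in> {0<..}}) lborel Y
      (\<lambda>y. (\<integral>\<^sup>+u. ennreal (dens (y, u)) * indicator {0<..} u \<partial>lborel)
        / emeasure M {\<omega> \<in> space M. U \<omega> \<in> {0<..}})"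
    by (rule distributed_conditional_fst[OF lborel.sigma_finite_measure_axioms joint]) simp
  ultimately show ?thesis
    using distributed_cong_density[OF conditional] distributed_borel_measurable by blast
qed

end

theorem corollary3:
  fixes M :: "'a measure" and Y U :: "'a \<Rightarrow> real"
    and g :: "real \<Rightarrow> real" and K mu1 mu2 sg rho :: real
  assumes "prob_space M"
    and g_meas: "g \<in> borel_measurable borel"
    and g_nonneg: "\<And>u. u \<ge> 0 \<Longrightarrow> g u \<ge> 0"
    and g_int: "set_integrable lborel {0..} g"
    and K_def: "K = (LINT u:{0..}|lborel. g u)"
    and K_pos: "0 < K"
    and sigma_pos: "0 < sg"
    and rho_pos: "0 < rho" and rho_lt1: "rho < 1"
    and joint: "distributed M lborel (\<lambda>\<omega>. (Y \<omega>, U \<omega>))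
                  (\<lambda>p. ennreal (biv_sym_density g K mu1 mu2 sg rho p))"
    and pos: "measure M {\<omega> \<in> space M. 0 < U \<omega>} > 0"
  shows "distributed (uniform_measure M {\<omega> \<in> space M. 0 < U \<omega>}) lborel Y
           (\<lambda>y. ennreal (cond_density g mu1 mu2 sg rho y))"
proof -
  interpret biv_sym_params g K mu1 mu2 sg rho
    using assms by unfold_locales auto
  have "{\<omega> \<in> space M. 0 < U \<omega>} = {\<omega> \<in> space M. U \<omega> \<in> {0<..}}"
    by simp
  moreover have "emeasure M {\<omega> \<in> space M. U \<omega> \<in> {0<..}} \<noteq> 0"
    using pos by (auto simp: measure_def)
  moreover have "distributed M (lborel \<Otimes>\<^sub>M lborel) (\<lambda>\<omega>. (Y \<omega>, U \<omega>))
      (\<lambda>p. ennreal (biv_sym_density g K mu1 mu2 sg rho p))"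
    using joint by (simp add: lborel_prod)
  ultimately show ?thesis
    using distributed_conditional_upper_half_plane[OF \<open>prob_space M\<close>] by simp
qed

end
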